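(* For every $n\geq1$, the number of $D_{2n}$-orbits of $\mathbf{X}_n$ whose elements have a stabilizer contained in the rotation subgroup $\langle\sigma\rangle=\{1,\sigma,\dots,\sigma^{n-1}\}$ equals $\sum_{d\mid n}\mathrm{orb}_1(d)$.
   Context: For an integer $n\geq1$ let $V_n=\{v_0,\dots,v_{n-1}\}$, indices modulo $n$. The dihedral group $D_{2n}=\{1,\sigma,\dots,\sigma^{n-1},\tau,\sigma\tau,\dots,\sigma^{n-1}\tau\}$ acts on subsets of $V_n$ elementwise, with $\sigma(v_i)=v_{i+1}$, $\tau(v_i)=v_{n-i}$. Let $\mathbf{X}_n$ be the family of subsets $X\subseteq V_n$ such that (a) there is no $i\in\mathbb{Z}_n$ with $v_i,v_{i+1}\in X$, and (b) for every $i\in\mathbb{Z}_n$ at least one of $v_i,v_{i+1},v_{i+2}$ lies in $X$ (for $n\geq3$ these are exactly the maximal independent sets of the cycle graph $C_n$ with edges $v_iv_{i+1}$). $\mathbf{X}_n$ is invariant under $D_{2n}$. For $X\in\mathbf{X}_n$, $\mathrm{Stab}(X)=\{g\in D_{2n}:g(X)=X\}$. For $d\mid 2n$, $\mathrm{orb}_d(n)$ denotes the number of $D_{2n}$-orbits of $\mathbf{X}_n$ of cardinality $2n/d$ (equivalently, whose elements have stabilizer of order $d$). *)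

theory Defs
  imports Main
begin

text \<open>Vertices v_0,...,v_{n-1} are the naturals 0..n-1 (indices mod n).
 Elements of the dihedral group D_{2n} are pairs (b,k) with k < n:
 (False,k) is sigma^k and (True,k) is sigma^k tau. The group is kept abstract
 (2n distinct elements) even when n \<le> 2, where the action is not faithful.\<close>

definition dihedral :: "nat \<Rightarrow> (bool \<times> nat) set" where
  "dihedral n = {(b, k). k < n}"

definition rotations :: "nat \<Rightarrow> (bool \<times> nat) set" where
  "rotations n = {(False, k) | k. k < n}"

text \<open>sigma^k (v_i) = v_{i+k};  sigma^k tau (v_i) = v_{k-i}.\<close>
definition act :: "nat \<Rightarrow> bool \<times> nat \<Rightarrow> nat \<Rightarrow> nat" where
  "act n g i = (if fst g then (snd g + n - i mod n) mod n else (i + snd g) mod n)"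

definition act_set :: "nat \<Rightarrow> bool \<times> nat \<Rightarrow> nat set \<Rightarrow> nat set" where
  "act_set n g X = act n g ` X"

definition Xfam :: "nat \<Rightarrow> nat set set" where
  "Xfam n = {X. X \<subseteq> {0..<n}
      \<and> \<not> (\<exists>i<n. i \<in> X \<and> (i + 1) mod n \<in> X)
      \<and> (\<forall>i<n. i \<in> X \<or> (i + 1) mod n \<in> X \<or> (i + 2) mod n \<in> X)}"

definition Stab :: "nat \<Rightarrow> nat set \<Rightarrow> (bool \<times> nat) set" where
  "Stab n X = {g \<in> dihedral n. act_set n g X = X}"

definition orbit :: "nat \<Rightarrow> nat set \<Rightarrow> nat set set" where
  "orbit n X = (\<lambda>g. act_set n g X) ` dihedral n"

definition orbits :: "nat \<Rightarrow> nat set set set" where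
  "orbits n = orbit n ` Xfam n"

definition orb :: "nat \<Rightarrow> nat \<Rightarrow> nat" where
  "orb d n = card {Y \<in> orbits n. card Y = (2 * n) div d}"

end

theory Submission
  imports Defs
begin

text \<open>If all stabilizers in an orbit consist of rotations, then for a member X the rotations
  fixing X are the multiples of some d dividing n, so X is the (n/d)-fold repetition of a pattern
  X' in \<open>X\<^sub>d\<close>, and no nontrivial element of \<open>D\<^sub>2\<^sub>d\<close> fixes X'. Conversely, repeating a pattern
  with trivial stabilizer gives a set all of whose stabilizing elements are rotations. Repetition
  commutes with the actions (through the reduction \<open>D\<^sub>2\<^sub>n \<rightarrow> D\<^sub>2\<^sub>d\<close>), so it maps free orbits to
  orbits, and the period d is recovered from the lifted orbit. Hence the orbits in question are in
  bijection with pairs (d, free \<open>D\<^sub>2\<^sub>d\<close>-orbit of \<open>X\<^sub>d\<close>) with d dividing n, and the free orbits are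
  exactly those of size 2d.\<close>

section \<open>The dihedral group as affine maps of the integers\<close>

text \<open>The element (b, k) acts on integer representatives as \<open>x \<mapsto> k - x\<close> (b) or \<open>x \<mapsto> x + k\<close>
  (\<not> b); by int_act, act n g is this map followed by reduction mod n, so the group laws become
  congruences in \<int>.\<close>

definition affine :: "bool \<times> nat \<Rightarrow> int \<Rightarrow> int" where
  "affine g j = (if fst g then int (snd g) - j else j + int (snd g))"

lemma int_act: assumes "0 < n" shows "int (act n g i) = affine g (int i) mod int n"
proof (cases g)
  case (Pair b k)
  have "int (k + n - i mod n) = int k + int n - int i mod int n"
    using mod_less_divisor[OF assms, of i] by (simp add: of_nat_diff zmod_int)
  moreover have "(int k + int n - int i mod int n) mod int n = (int k - int i) mod int n"
    by (metis add.commute add_diff_eq mod_add_self2 mod_diff_right_eq)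
  ultimately show ?thesis
    using assms Pair by (auto simp: act_def affine_def zmod_int)
qed

lemma affine_mod: "affine g (x mod m) mod m = affine g x mod m"
  by (auto simp: affine_def mod_simps)

lemma act_less: "0 < n \<Longrightarrow> act n g i < n"
  by (simp add: act_def)

lemma act_one: "act n (False, 0) i = i mod n"
  by (simp add: act_def)

text \<open>The translation part of the composite \<open>g \<circ> h\<close> is g applied to the translation part of h.\<close>

definition dih_mul :: "nat \<Rightarrow> bool \<times> nat \<Rightarrow> bool \<times> nat \<Rightarrow> bool \<times> nat" where
  "dih_mul n g h = (fst g \<noteq> fst h, nat (affine g (int (snd h)) mod int n))"

definition dih_inv :: "nat \<Rightarrow> bool \<times> nat \<Rightarrow> bool \<times> nat" where
  "dih_inv n g = (fst g, if fst g then snd g else nat (- int (snd g) mod int n))"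

lemma affine_dih_mul:
  "0 < n \<Longrightarrow> affine (dih_mul n g h) x mod int n = affine g (affine h x) mod int n"
  by (auto simp: affine_def dih_mul_def mod_simps algebra_simps)

lemma affine_dih_inv:
  "0 < n \<Longrightarrow> affine (dih_inv n g) (affine g x) mod int n = x mod int n"
  by (auto simp: affine_def dih_inv_def mod_simps)

lemma affine_dih_inv':
  assumes "0 < n"
  shows "affine g (affine (dih_inv n g) x) mod int n = x mod int n"
proof (cases "fst g")
  case False
  have "(x + - int (snd g) mod int n + int (snd g)) mod int n
      = (x + int (snd g) + - int (snd g) mod int n) mod int n"
    by (simp add: ac_simps)
  also have "\<dots> = x mod int n"
    by (simp add: mod_add_right_eq)
  finally show ?thesis
    using False assms by (simp add: affine_def dih_inv_def)
qed (simp add: affine_def dih_inv_def)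

lemma dih_mul_mem: "0 < n \<Longrightarrow> dih_mul n g h \<in> dihedral n"
  by (simp add: dih_mul_def dihedral_def nat_less_iff)

lemma dih_inv_mem: "0 < n \<Longrightarrow> g \<in> dihedral n \<Longrightarrow> dih_inv n g \<in> dihedral n"
  by (auto simp: dih_inv_def dihedral_def nat_less_iff)

lemma dih_one_mem: "0 < n \<Longrightarrow> (False, 0) \<in> dihedral n"
  by (simp add: dihedral_def)

text \<open>This has to be shown on group elements rather than on their action, which is not faithful
  for n \<le> 2.\<close>

lemma dih_mul_inv_eq_one_imp_eq:
  assumes n: "0 < n" and g: "g \<in> dihedral n" and h: "h \<in> dihedral n"
    and one: "dih_mul n (dih_inv n h) g = (False, 0)"
  shows "g = h"
proof -
  have "fst g = fst h"
    using one by (auto simp: dih_mul_def dih_inv_def)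
  have "nat (affine (dih_inv n h) (int (snd g)) mod int n) = 0"
    using one by (simp add: dih_mul_def)
  moreover have "affine (dih_inv n h) (int (snd g)) mod int n \<ge> 0"
    using n by simp
  ultimately have "affine (dih_inv n h) (int (snd g)) mod int n = 0"
    by linarith
  then have "affine h 0 mod int n = affine h (affine (dih_inv n h) (int (snd g))) mod int n"
    using affine_mod[of h "affine (dih_inv n h) (int (snd g))" "int n"] by simp
  also have "\<dots> = int (snd g) mod int n"
    using n by (rule affine_dih_inv')
  finally have "affine h 0 mod int n = int (snd g) mod int n" .
  then have "snd g = snd h"
    using g h by (auto simp: affine_def dihedral_def zmod_int split: if_splits)
  with \<open>fst g = fst h\<close> show ?thesis
    by (simp add: prod_eq_iff)
qed

lemma act_eq_iff:
  "0 < n \<Longrightarrow> act n g i = act n h j \<longleftrightarrow> affine g (int i) mod int n = affine h (int j) mod int n"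
  by (metis int_act of_nat_eq_iff)

lemma act_dih_mul: "0 < n \<Longrightarrow> act n (dih_mul n g h) i = act n g (act n h i)"
  by (simp only: act_eq_iff int_act affine_dih_mul affine_mod)

lemma act_dih_inv: assumes "0 < n" shows "act n (dih_inv n g) (act n g i) = i mod n"
proof -
  have "int (act n (dih_inv n g) (act n g i)) = int (i mod n)"
    using assms by (simp only: int_act affine_mod affine_dih_inv zmod_int)
  then show ?thesis by (simp only: of_nat_eq_iff)
qed

lemma act_dih_inv': assumes "0 < n" shows "act n g (act n (dih_inv n g) i) = i mod n"
proof -
  have "int (act n g (act n (dih_inv n g) i)) = int (i mod n)"
    using assms by (simp only: int_act affine_mod affine_dih_inv' zmod_int)
  then show ?thesis by (simp only: of_nat_eq_iff)
qed

section \<open>Orbits and stabilizers\<close>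

lemma act_set_subset: "0 < n \<Longrightarrow> act_set n g X \<subseteq> {0..<n}"
  by (auto simp: act_set_def act_less)

lemma act_set_dih_mul: "0 < n \<Longrightarrow> act_set n (dih_mul n g h) X = act_set n g (act_set n h X)"
  by (auto simp: act_set_def act_dih_mul image_comp)

lemma act_set_one: "X \<subseteq> {0..<n} \<Longrightarrow> act_set n (False, 0) X = X"
  by (auto simp: act_set_def act_one subset_iff image_iff)

lemma act_set_dih_inv:
  assumes "0 < n" "X \<subseteq> {0..<n}"
  shows "act_set n (dih_inv n g) (act_set n g X) = X"
proof -
  have "act_set n (dih_inv n g) (act_set n g X) = (\<lambda>i. i mod n) ` X"
    using assms by (auto simp: act_set_def image_comp act_dih_inv comp_def)
  also have "\<dots> = X"
    using assms(2) by (force simp: subset_iff image_iff)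
  finally show ?thesis .
qed

lemma Xfam_subset: "X \<in> Xfam n \<Longrightarrow> X \<subseteq> {0..<n}"
  by (simp add: Xfam_def)

lemma one_mem_Stab: "0 < n \<Longrightarrow> X \<subseteq> {0..<n} \<Longrightarrow> (False, 0) \<in> Stab n X"
  by (simp add: Stab_def act_set_one dih_one_mem)

lemma Stab_act_mem: "g \<in> Stab n X \<Longrightarrow> x \<in> X \<Longrightarrow> act n g x \<in> X"
  by (auto simp: Stab_def act_set_def)

lemma dih_inv_mem_Stab:
  "0 < n \<Longrightarrow> X \<subseteq> {0..<n} \<Longrightarrow> g \<in> Stab n X \<Longrightarrow> dih_inv n g \<in> Stab n X"
  using act_set_dih_inv[of n X g] by (auto simp: Stab_def dih_inv_mem)

lemma finite_dihedral: "finite (dihedral n)"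
  and card_dihedral: "card (dihedral n) = 2 * n"
proof -
  have "dihedral n = UNIV \<times> {..<n}"
    by (auto simp: dihedral_def)
  then show "finite (dihedral n)" "card (dihedral n) = 2 * n"
    by (simp_all add: card_cartesian_product)
qed

lemma orbit_subset: "0 < n \<Longrightarrow> orbit n X \<subseteq> Pow {0..<n}"
  by (auto simp: orbit_def dest: act_set_subset)

lemma finite_orbits: "0 < n \<Longrightarrow> finite (orbits n)"
proof -
  assume n: "0 < n"
  have "orbits n \<subseteq> Pow (Pow {0..<n})"
    using orbit_subset[OF n] by (auto simp: orbits_def)
  then show ?thesis
    by (rule finite_subset) simp
qed

lemma self_mem_orbit: "0 < n \<Longrightarrow> X \<subseteq> {0..<n} \<Longrightarrow> X \<in> orbit n X"
  unfolding orbit_def using dih_one_mem act_set_one by (metis image_eqI)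

lemma orbit_act_set:
  assumes n: "0 < n" and X: "X \<subseteq> {0..<n}" and g: "g \<in> dihedral n"
  shows "orbit n (act_set n g X) = orbit n X"
proof
  show "orbit n (act_set n g X) \<subseteq> orbit n X"
    using n by (auto simp: orbit_def act_set_dih_mul[symmetric] intro!: dih_mul_mem)
  show "orbit n X \<subseteq> orbit n (act_set n g X)"
  proof
    fix Z assume "Z \<in> orbit n X"
    then obtain h where "h \<in> dihedral n" "Z = act_set n h X"
      by (auto simp: orbit_def)
    then have "Z = act_set n (dih_mul n h (dih_inv n g)) (act_set n g X)"
      using n X by (simp add: act_set_dih_mul act_set_dih_inv)
    then show "Z \<in> orbit n (act_set n g X)"
      using n by (auto simp: orbit_def intro!: dih_mul_mem)
  qed
qed

lemma card_orbit_eq_iff_Stab_trivial: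
  assumes n: "0 < n" and X: "X \<subseteq> {0..<n}"
  shows "card (orbit n X) = 2 * n \<longleftrightarrow> Stab n X = {(False, 0)}"
proof -
  have "card (orbit n X) = 2 * n \<longleftrightarrow> inj_on (\<lambda>g. act_set n g X) (dihedral n)"
    using inj_on_iff_eq_card[OF finite_dihedral, of "\<lambda>g. act_set n g X" n]
    by (simp add: orbit_def card_dihedral)
  also have "\<dots> \<longleftrightarrow> Stab n X = {(False, 0)}"
  proof
    assume inj: "inj_on (\<lambda>g. act_set n g X) (dihedral n)"
    have "g = (False, 0)" if "g \<in> Stab n X" for g
      using that X inj_onD[OF inj _ _ dih_one_mem[OF n], of g] by (simp add: Stab_def act_set_one)
    then show "Stab n X = {(False, 0)}"
      using one_mem_Stab[OF n X] by blast
  next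
    assume trivial: "Stab n X = {(False, 0)}"
    show "inj_on (\<lambda>g. act_set n g X) (dihedral n)"
    proof (rule inj_onI)
      fix g h
      assume g: "g \<in> dihedral n" and h: "h \<in> dihedral n"
        and eq: "act_set n g X = act_set n h X"
      have "act_set n (dih_mul n (dih_inv n h) g) X = X"
        using n X eq by (simp add: act_set_dih_mul act_set_dih_inv)
      then have "dih_mul n (dih_inv n h) g \<in> Stab n X"
        using n by (simp add: Stab_def dih_mul_mem)
      then show "g = h"
        using dih_mul_inv_eq_one_imp_eq[OF n g h] trivial by simp
    qed
  qed
  finally show ?thesis .
qed

definition free_orbits :: "nat \<Rightarrow> nat set set set" where
  "free_orbits n = {Y \<in> orbits n. card Y = 2 * n}"

lemma mem_free_orbitD:
  assumes n: "0 < n" and Y: "Y \<in> free_orbits n" and Z: "Z \<in> Y"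
  shows "Z \<subseteq> {0..<n}" "Stab n Z = {(False, 0)}"
proof -
  obtain X g where X: "X \<in> Xfam n" "Y = orbit n X" and g: "g \<in> dihedral n" "Z = act_set n g X"
    using Y Z by (auto simp: free_orbits_def orbits_def orbit_def)
  show Z_sub: "Z \<subseteq> {0..<n}"
    using g n by (simp add: act_set_subset)
  have "orbit n Z = Y"
    using X g orbit_act_set[OF n Xfam_subset[OF X(1)] g(1)] by simp
  then show "Stab n Z = {(False, 0)}"
    using Y card_orbit_eq_iff_Stab_trivial[OF n Z_sub] by (simp add: free_orbits_def)
qed

section \<open>Periodic lifts\<close>

definition periodic_lift :: "nat \<Rightarrow> nat \<Rightarrow> nat set \<Rightarrow> nat set" where
  "periodic_lift n d X = {i. i < n \<and> i mod d \<in> X}"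

definition dih_reduce :: "nat \<Rightarrow> bool \<times> nat \<Rightarrow> bool \<times> nat" where
  "dih_reduce d g = (fst g, snd g mod d)"

lemma affine_dih_reduce: "affine (dih_reduce d g) x mod int d = affine g x mod int d"
  by (auto simp: affine_def dih_reduce_def mod_simps zmod_int)

lemma act_mod_dvd:
  assumes "0 < n" "0 < d" "d dvd n"
  shows "act n g i mod d = act d (dih_reduce d g) (i mod d)"
proof -
  have "int (act n g i mod d) = (affine g (int i) mod int n) mod int d"
    using assms by (simp add: zmod_int int_act)
  also have "\<dots> = affine g (int i mod int d) mod int d"
    using assms by (simp add: mod_mod_cancel affine_mod)
  also have "\<dots> = int (act d (dih_reduce d g) (i mod d))"
    using assms by (simp add: int_act affine_dih_reduce zmod_int)
  finally show ?thesis
    by (simp only: of_nat_eq_iff)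
qed

lemma inj_on_act: "0 < n \<Longrightarrow> inj_on (act n g) {0..<n}"
  by (rule inj_on_inverseI[where g = "act n (dih_inv n g)"]) (simp add: act_dih_inv)

lemma act_set_periodic_lift:
  assumes n: "0 < n" and d: "0 < d" "d dvd n" and X: "X \<subseteq> {0..<d}"
  shows "act_set n g (periodic_lift n d X) = periodic_lift n d (act_set d (dih_reduce d g) X)"
proof (intro equalityI subsetI)
  fix y assume "y \<in> act_set n g (periodic_lift n d X)"
  then obtain i where "i mod d \<in> X" "y = act n g i"
    by (auto simp: act_set_def periodic_lift_def)
  then show "y \<in> periodic_lift n d (act_set d (dih_reduce d g) X)"
    using n d by (simp add: periodic_lift_def act_set_def act_less act_mod_dvd)
next
  fix y assume "y \<in> periodic_lift n d (act_set d (dih_reduce d g) X)"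
  then obtain x where y: "y < n" and x: "x \<in> X" "y mod d = act d (dih_reduce d g) x"
    by (auto simp: periodic_lift_def act_set_def)
  define i where "i = act n (dih_inv n g) y"
  have "act n g i = y" and "i < n"
    using n y by (simp_all add: i_def act_dih_inv' act_less)
  then have "act d (dih_reduce d g) (i mod d) = act d (dih_reduce d g) x"
    using n d x by (metis act_mod_dvd)
  then have "i mod d = x"
    by (rule inj_onD[OF inj_on_act[OF d(1)]]) (use x X d in auto)
  then show "y \<in> act_set n g (periodic_lift n d X)"
    using \<open>act n g i = y\<close> \<open>i < n\<close> x by (auto simp: act_set_def periodic_lift_def)
qed

lemma periodic_lift_Int:
  assumes "d \<le> n" "A \<subseteq> {0..<d}"
  shows "periodic_lift n d A \<inter> {0..<d} = A"
  using assms by (auto simp: periodic_lift_def)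

lemma inj_on_periodic_lift: "d \<le> n \<Longrightarrow> inj_on (periodic_lift n d) (Pow {0..<d})"
  by (rule inj_on_inverseI[where g = "\<lambda>B. B \<inter> {0..<d}"]) (simp add: periodic_lift_Int)

lemma periodic_lift_mem_Xfam_iff:
  assumes n: "0 < n" and d: "0 < d" "d dvd n" and X: "X \<subseteq> {0..<d}"
  shows "periodic_lift n d X \<in> Xfam n \<longleftrightarrow> X \<in> Xfam d"
proof -
  define locally_ok :: "nat \<Rightarrow> nat set \<Rightarrow> nat \<Rightarrow> bool"
    where "locally_ok m Z i \<longleftrightarrow> \<not> (i \<in> Z \<and> (i + 1) mod m \<in> Z)
      \<and> (i \<in> Z \<or> (i + 1) mod m \<in> Z \<or> (i + 2) mod m \<in> Z)" for m Z i
  have Xfam_iff: "Z \<in> Xfam m \<longleftrightarrow> Z \<subseteq> {0..<m} \<and> (\<forall>i<m. locally_ok m Z i)" for m Z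
    by (auto simp: Xfam_def locally_ok_def)
  have shift: "(i + j) mod n \<in> periodic_lift n d X \<longleftrightarrow> (i mod d + j) mod d \<in> X" for i j
    using n d by (simp add: periodic_lift_def mod_mod_cancel mod_simps)
  have "locally_ok n (periodic_lift n d X) i \<longleftrightarrow> locally_ok d X (i mod d)" if "i < n" for i
    using shift[of i 0] shift[of i 1] shift[of i 2] that by (simp add: locally_ok_def)
  moreover have "(\<forall>i<n. locally_ok d X (i mod d)) \<longleftrightarrow> (\<forall>j<d. locally_ok d X j)"
    using d dvd_imp_le[OF d(2) n] by (metis mod_less mod_less_divisor order_less_le_trans)
  ultimately show ?thesis
    using X by (auto simp: Xfam_iff periodic_lift_def)
qed

lemma dih_reduce_image:
  assumes "0 < d" "d \<le> n"
  shows "dih_reduce d ` dihedral n = dihedral d"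
proof
  show "dih_reduce d ` dihedral n \<subseteq> dihedral d"
    using assms by (auto simp: dih_reduce_def dihedral_def)
  show "dihedral d \<subseteq> dih_reduce d ` dihedral n"
  proof
    fix g assume "g \<in> dihedral d"
    then have "g = dih_reduce d g" "g \<in> dihedral n"
      using assms by (auto simp: dih_reduce_def dihedral_def)
    then show "g \<in> dih_reduce d ` dihedral n" by blast
  qed
qed

lemma orbit_periodic_lift:
  assumes n: "0 < n" and d: "0 < d" "d dvd n" and X: "X \<subseteq> {0..<d}"
  shows "orbit n (periodic_lift n d X) = periodic_lift n d ` orbit d X"
proof -
  have "orbit n (periodic_lift n d X)
      = (\<lambda>g. periodic_lift n d (act_set d g X)) ` (dih_reduce d ` dihedral n)"
    using act_set_periodic_lift[OF assms] by (simp add: orbit_def image_image)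
  also have "\<dots> = periodic_lift n d ` orbit d X"
    using d dvd_imp_le[OF d(2) n] by (simp add: dih_reduce_image orbit_def image_image)
  finally show ?thesis .
qed

lemma Stab_periodic_lift:
  assumes n: "0 < n" and d: "0 < d" "d dvd n" and X: "X \<subseteq> {0..<d}" and k: "k < n"
  shows "(b, k) \<in> Stab n (periodic_lift n d X) \<longleftrightarrow> (b, k mod d) \<in> Stab d X"
proof -
  have "(b, k) \<in> Stab n (periodic_lift n d X)
      \<longleftrightarrow> periodic_lift n d (act_set d (b, k mod d) X) = periodic_lift n d X"
    using k act_set_periodic_lift[OF assms(1-4), of "(b, k)"]
    by (simp add: Stab_def dihedral_def dih_reduce_def)
  also have "\<dots> \<longleftrightarrow> act_set d (b, k mod d) X = X"
    using inj_on_periodic_lift[OF dvd_imp_le[OF d(2) n]] act_set_subset[OF d(1)] X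
    by (simp add: inj_on_eq_iff)
  also have "\<dots> \<longleftrightarrow> (b, k mod d) \<in> Stab d X"
    using d by (simp add: Stab_def dihedral_def)
  finally show ?thesis .
qed

section \<open>Sets whose stabilizer consists of rotations are periodic\<close>

lemma add_closed_periodic_nat_set_eq_multiples:
  fixes S :: "nat set"
  assumes n: "0 < n" and zero: "0 \<in> S" and add: "\<And>a b. a \<in> S \<Longrightarrow> b \<in> S \<Longrightarrow> a + b \<in> S"
    and periodic: "\<And>k. k \<in> S \<longleftrightarrow> k mod n \<in> S"
  obtains d where "0 < d" "d dvd n" "S = {k. d dvd k}"
proof -
  have mult: "m * a \<in> S" if "a \<in> S" for m a
    using that by (induction m) (simp_all add: zero add)
  have diff: "a - b \<in> S" if a: "a \<in> S" and b: "b \<in> S" for a b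
  proof (cases "b \<le> a")
    case True
    \<comment> \<open>\<open>(n - 1) * b\<close> plays the role of \<open>-b\<close> modulo n\<close>
    have "a + (n - 1) * b = (a - b) + n * b"
      using True n by (cases n) (simp_all add: algebra_simps)
    then have "(a - b) mod n = (a + (n - 1) * b) mod n"
      by simp
    then show ?thesis
      using periodic add[OF a mult[OF b]] by metis
  qed (simp add: zero)
  have "n \<in> S"
    using periodic[of n] zero by simp
  define d where "d = (LEAST k. 0 < k \<and> k \<in> S)"
  have d: "0 < d" "d \<in> S"
    using LeastI[of "\<lambda>k. 0 < k \<and> k \<in> S" n] n \<open>n \<in> S\<close> by (simp_all add: d_def)
  have dvd_of_mem: "d dvd k" if "k \<in> S" for k
  proof -
    have "k mod d \<in> S"
      using diff[OF that mult[OF d(2), of "k div d"]] by (simp add: minus_div_mult_eq_mod)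
    moreover have "k mod d < d"
      using d by simp
    ultimately have "k mod d = 0"
      using not_less_Least[of "k mod d" "\<lambda>k. 0 < k \<and> k \<in> S"] by (auto simp: d_def)
    then show ?thesis
      by (simp add: dvd_eq_mod_eq_0)
  qed
  have "S = {k. d dvd k}"
    using dvd_of_mem mult[OF d(2)] by (auto elim!: dvdE simp: mult.commute)
  then show thesis
    using that d(1) dvd_of_mem[OF \<open>n \<in> S\<close>] by blast
qed

lemma act_rotation_add:
  "act n (False, (a + b) mod n) i = act n (False, a mod n) (act n (False, b mod n) i)"
  by (simp add: act_def mod_simps) (simp add: ac_simps)

lemma rotation_mem_Stab_add_iff:
  assumes n: "0 < n" and X: "X \<subseteq> {0..<n}" and r: "(False, k mod n) \<in> Stab n X" and i: "i < n"
  shows "(i + k) mod n \<in> X \<longleftrightarrow> i \<in> X"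
proof -
  have act_r: "act n (False, k mod n) i = (i + k) mod n"
    by (simp add: act_def mod_add_right_eq)
  have "act n (dih_inv n (False, k mod n)) ((i + k) mod n) = i"
    using act_dih_inv[OF n, of "(False, k mod n)" i] i by (simp add: act_r)
  then show ?thesis
    using Stab_act_mem[OF r] Stab_act_mem[OF dih_inv_mem_Stab[OF n X r]] act_r by metis
qed

lemma rotations_in_Stab_eq_multiples:
  assumes n: "0 < n" and X: "X \<subseteq> {0..<n}"
  obtains d where "0 < d" "d dvd n" "\<And>k. (False, k mod n) \<in> Stab n X \<longleftrightarrow> d dvd k"
proof -
  let ?S = "{k. (False, k mod n) \<in> Stab n X}"
  have "a + b \<in> ?S" if "a \<in> ?S" "b \<in> ?S" for a b
  proof -
    have "act_set n (False, (a + b) mod n) X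
        = act_set n (False, a mod n) (act_set n (False, b mod n) X)"
      by (simp add: act_set_def image_image act_rotation_add)
    then show ?thesis
      using that n by (simp add: Stab_def dihedral_def)
  qed
  then obtain d where "0 < d" "d dvd n" "?S = {k. d dvd k}"
    using add_closed_periodic_nat_set_eq_multiples[OF n, of ?S] one_mem_Stab[OF n X] by auto
  then show thesis
    using that by blast
qed

lemma periodic_lift_of_Stab_subset_rotations:
  assumes n: "0 < n" and X: "X \<in> Xfam n" and rot: "Stab n X \<subseteq> rotations n"
  obtains d X' where "0 < d" "d dvd n" "X' \<in> Xfam d" "Stab d X' = {(False, 0)}"
    "X = periodic_lift n d X'"
proof -
  have X_sub: "X \<subseteq> {0..<n}"
    using X by (rule Xfam_subset)
  obtain d where d: "0 < d" "d dvd n" and Stab_rot: "\<And>k. (False, k mod n) \<in> Stab n X \<longleftrightarrow> d dvd k"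
    using rotations_in_Stab_eq_multiples[OF n X_sub] by blast
  have "d \<le> n"
    using d n by (simp add: dvd_imp_le)
  define X' where "X' = X \<inter> {0..<d}"
  have "i \<in> X \<longleftrightarrow> i mod d \<in> X" if "i < n" for i
  proof -
    have "(False, (i div d * d) mod n) \<in> Stab n X"
      using Stab_rot by simp
    moreover have "i mod d < n"
      using d \<open>d \<le> n\<close> by (meson mod_less_divisor order_less_le_trans)
    ultimately have "(i mod d + i div d * d) mod n \<in> X \<longleftrightarrow> i mod d \<in> X"
      by (rule rotation_mem_Stab_add_iff[OF n X_sub])
    then show ?thesis
      using that by simp
  qed
  then have X_eq: "X = periodic_lift n d X'"
    using X_sub d by (auto simp: periodic_lift_def X'_def)
  have X'_sub: "X' \<subseteq> {0..<d}"
    by (auto simp: X'_def)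
  have "X' \<in> Xfam d"
    using X X_eq periodic_lift_mem_Xfam_iff[OF n d X'_sub] by simp
  moreover have "g = (False, 0)" if g: "g \<in> Stab d X'" for g
  proof -
    obtain b k where bk: "g = (b, k)" "k < d"
      using g by (auto simp: Stab_def dihedral_def)
    then have "(b, k) \<in> Stab n X"
      using g Stab_periodic_lift[OF n d X'_sub, of k b] \<open>d \<le> n\<close> X_eq by simp
    then have "\<not> b" and "d dvd k"
      using rot Stab_rot[of k] bk \<open>d \<le> n\<close> by (auto simp: rotations_def)
    then show ?thesis
      using bk by (auto dest: nat_dvd_not_less)
  qed
  ultimately show thesis
    using that d X_eq one_mem_Stab[OF d(1) X'_sub] by blast
qed

lemma dvd_of_periodic_lift_eq:
  assumes n: "0 < n" and d: "0 < d" "d dvd n" and e: "0 < e" "e dvd n"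
    and A: "A \<subseteq> {0..<d}" and B: "B \<subseteq> {0..<e}" and B_free: "Stab e B = {(False, 0)}"
    and eq: "periodic_lift n d A = periodic_lift n e B"
  shows "e dvd d"
proof -
  have "(False, (d mod n) mod d) \<in> Stab d A"
    using one_mem_Stab[OF d(1) A] d by (simp add: mod_mod_cancel)
  then have "(False, (d mod n) mod e) \<in> Stab e B"
    using Stab_periodic_lift[OF n d A] Stab_periodic_lift[OF n e B] eq n by simp
  then show ?thesis
    using B_free e by (simp add: mod_mod_cancel dvd_eq_mod_eq_0)
qed

lemma Stab_periodic_lift_subset_rotations:
  assumes n: "0 < n" and d: "0 < d" "d dvd n" and Z: "Z \<subseteq> {0..<d}"
    and Z_free: "Stab d Z = {(False, 0)}"
  shows "Stab n (periodic_lift n d Z) \<subseteq> rotations n"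
proof
  fix g assume g: "g \<in> Stab n (periodic_lift n d Z)"
  then obtain b k where bk: "g = (b, k)" "k < n"
    by (auto simp: Stab_def dihedral_def)
  then have "(b, k mod d) \<in> Stab d Z"
    using g Stab_periodic_lift[OF n d Z] by simp
  then show "g \<in> rotations n"
    using Z_free bk by (simp add: rotations_def)
qed

lemma periodic_lift_free_orbit_mem:
  assumes n: "0 < n" and d: "d dvd n" and Y: "Y \<in> free_orbits d"
  shows "periodic_lift n d ` Y \<in> {Y \<in> orbits n. \<forall>X\<in>Y. Stab n X \<subseteq> rotations n}"
proof -
  have d_pos: "0 < d"
    using d n by (auto intro: Nat.gr0I)
  obtain X where X: "X \<in> Xfam d" "Y = orbit d X"
    using Y by (auto simp: free_orbits_def orbits_def)
  have X_sub: "X \<subseteq> {0..<d}"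
    using X(1) by (rule Xfam_subset)
  have "periodic_lift n d ` Y = orbit n (periodic_lift n d X)"
    using orbit_periodic_lift[OF n d_pos d X_sub] X(2) by simp
  moreover have "periodic_lift n d X \<in> Xfam n"
    using periodic_lift_mem_Xfam_iff[OF n d_pos d X_sub] X(1) by simp
  ultimately have "periodic_lift n d ` Y \<in> orbits n"
    by (simp add: orbits_def)
  moreover have "Stab n (periodic_lift n d Z) \<subseteq> rotations n" if "Z \<in> Y" for Z
    using Stab_periodic_lift_subset_rotations[OF n d_pos d]
      mem_free_orbitD[OF d_pos Y that] by blast
  ultimately show ?thesis
    by blast
qed

lemma orbit_with_rotation_Stabs_eq_periodic_lift:
  assumes n: "0 < n" and Y: "Y \<in> orbits n" and rot: "\<forall>X\<in>Y. Stab n X \<subseteq> rotations n"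
  shows "\<exists>d Y'. d dvd n \<and> Y' \<in> free_orbits d \<and> Y = periodic_lift n d ` Y'"
proof -
  obtain X where X: "X \<in> Xfam n" "Y = orbit n X"
    using Y by (auto simp: orbits_def)
  then have "Stab n X \<subseteq> rotations n"
    using rot self_mem_orbit[OF n Xfam_subset[OF X(1)]] by blast
  then obtain d X' where d: "0 < d" "d dvd n" and X': "X' \<in> Xfam d" "Stab d X' = {(False, 0)}"
    and X_eq: "X = periodic_lift n d X'"
    using periodic_lift_of_Stab_subset_rotations[OF n X(1)] by blast
  have "orbit d X' \<in> free_orbits d"
    using X' card_orbit_eq_iff_Stab_trivial[OF d(1) Xfam_subset[OF X'(1)]]
    by (auto simp: free_orbits_def orbits_def)
  moreover have "Y = periodic_lift n d ` orbit d X'"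
    using X(2) X_eq orbit_periodic_lift[OF n d Xfam_subset[OF X'(1)]] by simp
  ultimately show ?thesis
    using d by blast
qed

lemma periodic_lift_free_orbits_eq_imp_eq:
  assumes n: "0 < n" and d: "d dvd n" and e: "e dvd n"
    and Y: "Y \<in> free_orbits d" and Y': "Y' \<in> free_orbits e"
    and eq: "periodic_lift n d ` Y = periodic_lift n e ` Y'"
  shows "d = e \<and> Y = Y'"
proof -
  have d_pos: "0 < d" and e_pos: "0 < e"
    using d e n by (auto intro: Nat.gr0I)
  obtain X where X: "X \<in> Xfam d" "Y = orbit d X"
    using Y by (auto simp: free_orbits_def orbits_def)
  then have "X \<in> Y"
    using self_mem_orbit[OF d_pos Xfam_subset] by blast
  then obtain Z where Z: "Z \<in> Y'" "periodic_lift n d X = periodic_lift n e Z"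
    using eq by (metis image_iff imageI)
  note X_free = mem_free_orbitD[OF d_pos Y \<open>X \<in> Y\<close>]
  note Z_free = mem_free_orbitD[OF e_pos Y' Z(1)]
  have "d = e"
    using dvd_of_periodic_lift_eq[OF n d_pos d e_pos e X_free(1) Z_free Z(2)]
      dvd_of_periodic_lift_eq[OF n e_pos e d_pos d Z_free(1) X_free Z(2)[symmetric]]
    by (rule dvd_antisym[rotated])
  moreover have "Y \<subseteq> Pow {0..<d}" "Y' \<subseteq> Pow {0..<e}"
    using mem_free_orbitD(1)[OF d_pos Y] mem_free_orbitD(1)[OF e_pos Y']
    by blast+
  ultimately show ?thesis
    using eq inj_on_image_eq_iff[OF inj_on_periodic_lift[OF dvd_imp_le[OF d n]]] by simp
qed

lemma bij_betw_periodic_lift_free_orbits: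
  assumes n: "0 < n"
  shows "bij_betw (\<lambda>(d, Y). periodic_lift n d ` Y) (SIGMA d:{d. d dvd n}. free_orbits d)
           {Y \<in> orbits n. \<forall>X\<in>Y. Stab n X \<subseteq> rotations n}"
    (is "bij_betw ?f ?A ?B")
proof (rule bij_betwI')
  fix p q assume "p \<in> ?A" "q \<in> ?A"
  then obtain d Y e Y' where "p = (d, Y)" "q = (e, Y')" "d dvd n" "e dvd n"
    "Y \<in> free_orbits d" "Y' \<in> free_orbits e"
    by blast
  then show "?f p = ?f q \<longleftrightarrow> p = q"
    using periodic_lift_free_orbits_eq_imp_eq[OF n] by auto
next
  fix p assume "p \<in> ?A"
  then obtain d Y where "p = (d, Y)" "d dvd n" "Y \<in> free_orbits d"
    by blast
  then show "?f p \<in> ?B"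
    using periodic_lift_free_orbit_mem[OF n] by simp
next
  fix Y assume "Y \<in> ?B"
  then obtain d Y' where "d dvd n" "Y' \<in> free_orbits d" "Y = periodic_lift n d ` Y'"
    using orbit_with_rotation_Stabs_eq_periodic_lift[OF n] by blast
  then show "\<exists>p\<in>?A. Y = ?f p"
    by (intro bexI[of _ "(d, Y')"]) simp_all
qed

theorem proposition2p3:
  fixes n :: nat
  assumes "n \<ge> 1"
  shows "card {Y \<in> orbits n. \<forall>X\<in>Y. Stab n X \<subseteq> rotations n}
           = (\<Sum>d\<in>{d. d dvd n}. orb 1 d)"
proof -
  have n: "0 < n"
    using assms by simp
  have "finite (free_orbits d)" if "d dvd n" for d
    using finite_orbits[of d] that n by (auto simp: free_orbits_def intro: Nat.gr0I)
  then have "card (SIGMA d:{d. d dvd n}. free_orbits d) = (\<Sum>d\<in>{d. d dvd n}. card (free_orbits d))"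
    using n by simp
  also have "\<dots> = (\<Sum>d\<in>{d. d dvd n}. orb 1 d)"
    by (simp add: orb_def free_orbits_def)
  finally show ?thesis
    using bij_betw_same_card[OF bij_betw_periodic_lift_free_orbits[OF n]] by simp
qed

end
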